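(* Let $\mathbf{B}\in\dot{\mathbb{P}}(\mathbb{L}(\mathbf{C}))$ with $|\mathbf{B}|=|\mathbf{C}|$, and suppose that all, or all but one, of the literals $L\in\mathbf{B}$ have a positive monotonic effect on $D$ relative to $\mathbf{C}$. Then $\mathbf{B}$ is singular for $\mathcal{D}(\mathbf{C},\Omega)$ if and only if $\mathbf{B}$ is irreducible for $\mathcal{D}(\mathbf{C},\Omega)$.
   Context: Events are binary random variables on a population $\Omega$; $\overline{X}=1-X$; $\mathbb{L}(\mathbf{C})=\mathbf{C}\cup\{\overline{X}:X\in\mathbf{C}\}$; $\dot{\mathbb{P}}(\mathbb{L}(\mathbf{C}))$ is the set of subsets of $\mathbb{L}(\mathbf{C})$ not containing both $X$ and $\overline{X}$; $(L)_{\mathbf{c}}$ is the value of literal $L$ under assignment $\mathbf{c}$; $\bigwedge(\mathbf{B})=\min_{L\in\mathbf{B}}L$. Potential outcomes $\mathcal{D}(\mathbf{C},\Omega)$: $D_{\mathbf{c}}(\omega)\in\{0,1\}$. A literal $L$ has a positive monotonic effect on $D$ relative to $\mathbf{C}$ if for all $\omega$ and assignments $\mathbf{c},\mathbf{c}'$ differing only in the variable underlying $L$ with $(L)_{\mathbf{c}}=1,(L)_{\mathbf{c}'}=0$, $D_{\mathbf{c}}(\omega)\ge D_{\mathbf{c}'}(\omega)$. $\mathbf{B}$ is a sufficient cause for $D$ relative to $\mathbf{C}$ for $\omega^*$ if some $\mathbf{c}^*$ has $(\bigwedge(\mathbf{B}))_{\mathbf{c}^*}=1$ and $D_{\mathbf{c}}(\omega^*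 )=1$ whenever $(\bigwedge(\mathbf{B}))_{\mathbf{c}}=1$; minimal if no proper subset is such; singular for $\omega^*$ if minimal and no other $\mathbf{B}'\in\dot{\mathbb{P}}(\mathbb{L}(\mathbf{C}))$ is a minimal sufficient cause for $\omega^*$; singular for $\mathcal{D}(\mathbf{C},\Omega)$ if singular for some $\omega^*$. A sufficient cause representation $(\mathbf{A},\mathfrak{B})$ for $\mathcal{D}(\mathbf{C},\Omega)$: binary random variables $\mathbf{A}=\langle A_1,\dots,A_p\rangle$ on $\Omega$ unaffected by interventions on $\mathbf{C}$ and $\mathfrak{B}=\langle\mathbf{B}_1,\dots,\mathbf{B}_p\rangle$, $\mathbf{B}_i\in\dot{\mathbb{P}}(\mathbb{L}(\mathbf{C}))$, with $D_{\mathbf{c}}(\omega)=1$ iff some $j$ has $A_j(\omega)=1$ and $(\bigwedge(\mathbf{B}_j))_{\mathbf{c}}=1$. $\mathbf{B}$ is irreducible for $\mathcal{D}(\mathbf{C},\Omega)$ if every such representation has some $\mathbf{B}_i\supseteq\mathbf{B}$. *)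

theory Defs
  imports Main
begin

datatype 'v lit = Pos 'v | Neg 'v

fun lit_var :: "'v lit \<Rightarrow> 'v" where
  "lit_var (Pos x) = x" | "lit_var (Neg x) = x"

fun lit_val :: "('v \<Rightarrow> bool) \<Rightarrow> 'v lit \<Rightarrow> bool" where
  "lit_val c (Pos x) = c x" | "lit_val c (Neg x) = (\<not> c x)"

text \<open>Assignments to C (values outside C fixed to False, so that assignments
  to C correspond bijectively to these functions).\<close>
definition asg :: "'v set \<Rightarrow> ('v \<Rightarrow> bool) set" where
  "asg C = {c. \<forall>v. v \<notin> C \<longrightarrow> c v = False}"

definition Lits :: "'v set \<Rightarrow> 'v lit set" where
  "Lits C = Pos ` C \<union> Neg ` C"

definition Pdot :: "'v set \<Rightarrow> 'v lit set set" where
  "Pdot C = {B. B \<subseteq> Lits C \<and> \<not> (\<exists>x. Pos x \<in> B \<and> Neg x \<in> B)}"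

definition conj_val :: "('v \<Rightarrow> bool) \<Rightarrow> 'v lit set \<Rightarrow> bool" where
  "conj_val c B = (\<forall>L\<in>B. lit_val c L)"

definition pos_mono ::
  "'v set \<Rightarrow> 'w set \<Rightarrow> (('v \<Rightarrow> bool) \<Rightarrow> 'w \<Rightarrow> bool) \<Rightarrow> 'v lit \<Rightarrow> bool" where
  "pos_mono C \<Omega> D L = (\<forall>\<omega>\<in>\<Omega>. \<forall>c\<in>asg C. \<forall>c'\<in>asg C.
      (\<forall>v. v \<noteq> lit_var L \<longrightarrow> c v = c' v) \<longrightarrow> lit_val c L \<longrightarrow> \<not> lit_val c' L
      \<longrightarrow> (D c' \<omega> \<longrightarrow> D c \<omega>))"

definition suff_cause ::
  "'v set \<Rightarrow> (('v \<Rightarrow> bool) \<Rightarrow> 'w \<Rightarrow> bool) \<Rightarrow> 'v lit set \<Rightarrow> 'w \<Rightarrow> bool" where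
  "suff_cause C D B \<omega> = (B \<in> Pdot C \<and> (\<exists>c\<in>asg C. conj_val c B)
      \<and> (\<forall>c\<in>asg C. conj_val c B \<longrightarrow> D c \<omega>))"

definition min_suff_cause ::
  "'v set \<Rightarrow> (('v \<Rightarrow> bool) \<Rightarrow> 'w \<Rightarrow> bool) \<Rightarrow> 'v lit set \<Rightarrow> 'w \<Rightarrow> bool" where
  "min_suff_cause C D B \<omega> = (suff_cause C D B \<omega> \<and> (\<forall>B'. B' \<subset> B \<longrightarrow> \<not> suff_cause C D B' \<omega>))"

definition singular_for ::
  "'v set \<Rightarrow> (('v \<Rightarrow> bool) \<Rightarrow> 'w \<Rightarrow> bool) \<Rightarrow> 'v lit set \<Rightarrow> 'w \<Rightarrow> bool" where
  "singular_for C D B \<omega> = (min_suff_cause C D B \<omega> \<and>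
      (\<forall>B'\<in>Pdot C. B' \<noteq> B \<longrightarrow> \<not> min_suff_cause C D B' \<omega>))"

definition singular ::
  "'v set \<Rightarrow> 'w set \<Rightarrow> (('v \<Rightarrow> bool) \<Rightarrow> 'w \<Rightarrow> bool) \<Rightarrow> 'v lit set \<Rightarrow> bool" where
  "singular C \<Omega> D B = (\<exists>\<omega>\<in>\<Omega>. singular_for C D B \<omega>)"

text \<open>A sufficient cause representation (A, \<BB>) as a list of pairs (A_j, B_j);
  each A_j :: 'w \<Rightarrow> bool does not depend on the assignment c.\<close>
definition suff_rep ::
  "'v set \<Rightarrow> 'w set \<Rightarrow> (('v \<Rightarrow> bool) \<Rightarrow> 'w \<Rightarrow> bool) \<Rightarrow> (('w \<Rightarrow> bool) \<times> 'v lit set) list \<Rightarrow> bool" where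
  "suff_rep C \<Omega> D R = ((\<forall>(A, B)\<in>set R. B \<in> Pdot C) \<and>
      (\<forall>\<omega>\<in>\<Omega>. \<forall>c\<in>asg C. D c \<omega> \<longleftrightarrow> (\<exists>(A, B)\<in>set R. A \<omega> \<and> conj_val c B)))"

definition irreducible ::
  "'v set \<Rightarrow> 'w set \<Rightarrow> (('v \<Rightarrow> bool) \<Rightarrow> 'w \<Rightarrow> bool) \<Rightarrow> 'v lit set \<Rightarrow> bool" where
  "irreducible C \<Omega> D B = (\<forall>R. suff_rep C \<Omega> D R \<longrightarrow> (\<exists>(A, B')\<in>set R. B \<subseteq> B'))"

end

theory Submission
  imports Defs
begin

text \<open>Since \<open>|B| = |C|\<close>, the conjunction of \<open>B\<close> pins down a single assignment \<open>c\<^sub>B\<close>, and \<open>B\<close> is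
  singular for \<open>\<omega>\<close> exactly when \<open>D(-, \<omega>)\<close> is the indicator of \<open>c\<^sub>B\<close>. Such an \<open>\<omega>\<close> forces every
  representation to contain a conjunct satisfied only by \<open>c\<^sub>B\<close>, i.e. one containing \<open>B\<close>.
  Conversely, if no \<open>\<omega>\<close> is of this kind, monotonicity lets any \<open>c \<noteq> c\<^sub>B\<close> with \<open>D\<^sub>c(\<omega>) = 1\<close> be
  moved towards \<open>c\<^sub>B\<close>, one literal at a time, down to a neighbour of \<open>c\<^sub>B\<close> (differing in one
  variable) with outcome 1; hence \<open>D\<^sub>c\<^sub>B(\<omega>) = 1\<close> can be covered by the conjunctions \<open>B - {L}\<close>,
  and all other assignments by their full conjunctions, giving a representation in which no
  conjunct contains \<open>B\<close>.\<close>

definition asg_of :: "'v lit set \<Rightarrow> 'v \<Rightarrow> bool" where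
  "asg_of B v = (Pos v \<in> B)"

definition asg_conj :: "'v set \<Rightarrow> ('v \<Rightarrow> bool) \<Rightarrow> 'v lit set" where
  "asg_conj C c = (\<lambda>v. if c v then Pos v else Neg v) ` C"

definition flip :: "'v \<Rightarrow> ('v \<Rightarrow> bool) \<Rightarrow> 'v \<Rightarrow> bool" where
  "flip v c = c(v := \<not> c v)"

lemma lit_val_flip:
  "lit_val (flip v c) L = (if lit_var L = v then \<not> lit_val c L else lit_val c L)"
  by (cases L) (auto simp: flip_def)

lemma flip_flip [simp]: "flip v (flip v c) = c"
  by (auto simp: flip_def)

lemma flip_neq [simp]: "flip v c \<noteq> c"
  by (metis flip_def fun_upd_same)

lemma flip_in_asg: "c \<in> asg C \<Longrightarrow> v \<in> C \<Longrightarrow> flip v c \<in> asg C"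
  by (auto simp: asg_def flip_def)

lemma lit_eqI: "lit_val c L \<Longrightarrow> lit_val c L' \<Longrightarrow> lit_var L = lit_var L' \<Longrightarrow> L = L'"
  by (cases L; cases L') auto

lemma finite_asg: "finite C \<Longrightarrow> finite (asg C)"
proof -
  assume "finite C"
  have "asg C \<subseteq> (\<lambda>S v. v \<in> S) ` Pow C"
  proof
    fix c assume "c \<in> asg C"
    then have "c = (\<lambda>v. v \<in> {v \<in> C. c v})" by (auto simp: asg_def)
    then show "c \<in> (\<lambda>S v. v \<in> S) ` Pow C" by blast
  qed
  then show ?thesis using \<open>finite C\<close> finite_subset by blast
qed

lemma Pdot_lit_var_mem: "B \<in> Pdot C \<Longrightarrow> L \<in> B \<Longrightarrow> lit_var L \<in> C"
  by (cases L) (auto simp: Pdot_def Lits_def)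

lemma Pdot_mono: "B \<in> Pdot C \<Longrightarrow> X \<subseteq> B \<Longrightarrow> X \<in> Pdot C"
  by (auto simp: Pdot_def)

lemma finite_Pdot: "finite C \<Longrightarrow> B \<in> Pdot C \<Longrightarrow> finite B"
  by (auto simp: Pdot_def Lits_def intro: finite_subset)

lemma asg_of_in_asg: "B \<in> Pdot C \<Longrightarrow> asg_of B \<in> asg C"
  by (auto simp: asg_def asg_of_def Pdot_def Lits_def)

lemma conj_val_asg_of: "B \<in> Pdot C \<Longrightarrow> conj_val (asg_of B) B"
  unfolding conj_val_def
proof
  fix L assume "B \<in> Pdot C" "L \<in> B"
  then show "lit_val (asg_of B) L" by (cases L) (auto simp: asg_of_def Pdot_def)
qed

lemma inj_on_lit_var_Pdot: "B \<in> Pdot C \<Longrightarrow> inj_on lit_var B"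
  by (metis conj_val_asg_of conj_val_def inj_onI lit_eqI)

lemma lit_var_image_eq:
  assumes "finite C" "B \<in> Pdot C" "card B = card C"
  shows "lit_var ` B = C"
proof (rule card_subset_eq)
  show "lit_var ` B \<subseteq> C" using assms(2) Pdot_lit_var_mem by blast
  show "card (lit_var ` B) = card C"
    using card_image[OF inj_on_lit_var_Pdot[OF assms(2)]] assms(3) by simp
qed (fact assms(1))

lemma conj_val_iff_eq_asg_of:
  assumes "B \<in> Pdot C" "lit_var ` B = C" "c \<in> asg C"
  shows "conj_val c B \<longleftrightarrow> c = asg_of B"
proof
  assume sat: "conj_val c B"
  show "c = asg_of B"
  proof
    fix v show "c v = asg_of B v"
    proof (cases "v \<in> C")
      case True
      then obtain L where "L \<in> B" "lit_var L = v" using assms(2) by blast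
      moreover have "lit_val c L" "lit_val (asg_of B) L"
        using \<open>L \<in> B\<close> sat conj_val_asg_of[OF assms(1)] by (auto simp: conj_val_def)
      ultimately show ?thesis by (cases L) auto
    next
      case False
      then show ?thesis
        using assms(3) asg_of_in_asg[OF assms(1)] by (auto simp: asg_def)
    qed
  qed
qed (use conj_val_asg_of[OF assms(1)] in simp)

lemma conj_val_flip_Diff:
  assumes "B \<in> Pdot C" "L \<in> B" "conj_val c B"
  shows "conj_val (flip (lit_var L) c) (B - {L})"
  using assms inj_on_lit_var_Pdot[OF assms(1)]
  by (auto simp: conj_val_def lit_val_flip inj_on_eq_iff)

lemma conj_val_Diff_iff:
  assumes "B \<in> Pdot C" "lit_var ` B = C" "c \<in> asg C" "L \<in> B"
  shows "conj_val c (B - {L}) \<longleftrightarrow> c = asg_of B \<or> c = flip (lit_var L) (asg_of B)"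
proof
  assume sat: "conj_val c (B - {L})"
  show "c = asg_of B \<or> c = flip (lit_var L) (asg_of B)"
  proof (cases "lit_val c L")
    case True
    then have "conj_val c B" using sat by (auto simp: conj_val_def)
    then show ?thesis using conj_val_iff_eq_asg_of[OF assms(1-3)] by blast
  next
    case False
    have "conj_val (flip (lit_var L) c) B"
      using sat False inj_on_lit_var_Pdot[OF assms(1)] assms(4)
      by (auto simp: conj_val_def lit_val_flip inj_on_eq_iff)
    then have "flip (lit_var L) c = asg_of B"
      using conj_val_iff_eq_asg_of[OF assms(1,2)] flip_in_asg[OF assms(3)]
        Pdot_lit_var_mem[OF assms(1,4)] by blast
    then show ?thesis by (metis flip_flip)
  qed
next
  show "c = asg_of B \<or> c = flip (lit_var L) (asg_of B) \<Longrightarrow> conj_val c (B - {L})"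
    using conj_val_asg_of[OF assms(1)] conj_val_flip_Diff[OF assms(1,4)]
    by (auto simp: conj_val_def)
qed

lemma asg_conj_Pdot: "asg_conj C c \<in> Pdot C"
  by (auto simp: asg_conj_def Pdot_def Lits_def)

lemma finite_asg_conj: "finite C \<Longrightarrow> finite (asg_conj C c)"
  by (simp add: asg_conj_def)

lemma conj_val_asg_conj_iff:
  assumes "c \<in> asg C" "c' \<in> asg C"
  shows "conj_val c' (asg_conj C c) \<longleftrightarrow> c' = c"
proof
  assume "conj_val c' (asg_conj C c)"
  then have "c' v = c v" if "v \<in> C" for v
  proof -
    have "(if c v then Pos v else Neg v) \<in> asg_conj C c" using that by (simp add: asg_conj_def)
    then have "lit_val c' (if c v then Pos v else Neg v)"
      using \<open>conj_val c' (asg_conj C c)\<close> by (simp add: conj_val_def)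
    then show ?thesis by (cases "c v") auto
  qed
  then show "c' = c" using assms by (auto simp: asg_def)
qed (auto simp: conj_val_def asg_conj_def)

lemma lit_mem_if_conj_val_unique:
  assumes "c \<in> asg C" "conj_val c B'" "\<forall>c'\<in>asg C. conj_val c' B' \<longrightarrow> c' = c"
    and "lit_var L \<in> C" "lit_val c L"
  shows "L \<in> B'"
proof (rule ccontr)
  assume "L \<notin> B'"
  have "conj_val (flip (lit_var L) c) B'"
    unfolding conj_val_def
  proof
    fix L' assume "L' \<in> B'"
    then have "lit_val c L'" using assms(2) by (simp add: conj_val_def)
    moreover have "lit_var L' \<noteq> lit_var L"
      using lit_eqI[OF \<open>lit_val c L'\<close> assms(5)] \<open>L' \<in> B'\<close> \<open>L \<notin> B'\<close> by blast
    ultimately show "lit_val (flip (lit_var L) c) L'" by (simp add: lit_val_flip)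
  qed
  then have "flip (lit_var L) c = c" using assms(3) flip_in_asg[OF assms(1,4)] by blast
  then show False by simp
qed

subsection \<open>Singularity\<close>

lemma min_suff_cause_subset:
  assumes "finite B" "suff_cause C D B \<omega>"
  shows "\<exists>X\<subseteq>B. min_suff_cause C D X \<omega>"
  using assms
proof (induction B rule: finite_psubset_induct)
  case (psubset B)
  show ?case
  proof (cases "min_suff_cause C D B \<omega>")
    case True
    then show ?thesis by blast
  next
    case False
    then obtain B' where B': "B' \<subset> B" "suff_cause C D B' \<omega>"
      using psubset.prems by (auto simp: min_suff_cause_def)
    then obtain X where "X \<subseteq> B'" "min_suff_cause C D X \<omega>" using psubset.IH by blast
    then show ?thesis using B'(1) by blast
  qed
qed

lemma singular_for_imp_unique:
  assumes "finite C" "B \<in> Pdot C" "lit_var ` B = C" "singular_for C D B \<omega>"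
  shows "\<forall>c\<in>asg C. D c \<omega> \<longleftrightarrow> c = asg_of B"
proof (intro ballI iffI)
  fix c assume c: "c \<in> asg C" "D c \<omega>"
  have "suff_cause C D (asg_conj C c) \<omega>"
    unfolding suff_cause_def using asg_conj_Pdot c conj_val_asg_conj_iff[OF c(1)] by blast
  with finite_asg_conj[OF assms(1)] obtain X
    where X: "X \<subseteq> asg_conj C c" "min_suff_cause C D X \<omega>"
    by (metis min_suff_cause_subset)
  then have "X \<in> Pdot C" by (simp add: min_suff_cause_def suff_cause_def)
  then have "X = B" using X(2) assms(4) unfolding singular_for_def by blast
  then have "conj_val c B"
    using X(1) conj_val_asg_conj_iff[OF c(1) c(1)] by (auto simp: conj_val_def)
  then show "c = asg_of B" using conj_val_iff_eq_asg_of[OF assms(2,3) c(1)] by blast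
next
  fix c assume "c = asg_of B"
  have "suff_cause C D B \<omega>" using assms(4) by (simp add: singular_for_def min_suff_cause_def)
  then show "D c \<omega>"
    using \<open>c = asg_of B\<close> asg_of_in_asg[OF assms(2)] conj_val_asg_of[OF assms(2)]
    by (simp add: suff_cause_def)
qed

lemma singular_for_if_unique:
  assumes "B \<in> Pdot C" "lit_var ` B = C" and unique: "\<forall>c\<in>asg C. D c \<omega> \<longleftrightarrow> c = asg_of B"
  shows "singular_for C D B \<omega>"
proof -
  have cB: "asg_of B \<in> asg C" using asg_of_in_asg[OF assms(1)] .
  have suff: "suff_cause C D B \<omega>"
    using assms(1) cB conj_val_asg_of[OF assms(1)] conj_val_iff_eq_asg_of[OF assms(1,2)] unique
    by (auto simp: suff_cause_def)
  have no_proper: "\<not> suff_cause C D Y \<omega>" if "Y \<subset> B" for Y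
  proof
    assume suffY: "suff_cause C D Y \<omega>"
    obtain L where L: "L \<in> B" "L \<notin> Y" using \<open>Y \<subset> B\<close> by blast
    let ?c = "flip (lit_var L) (asg_of B)"
    have c: "?c \<in> asg C" using flip_in_asg[OF cB Pdot_lit_var_mem[OF assms(1) L(1)]] .
    have "conj_val ?c Y"
      using conj_val_flip_Diff[OF assms(1) L(1) conj_val_asg_of[OF assms(1)]] that L(2)
      by (auto simp: conj_val_def)
    then have "D ?c \<omega>" using suffY c by (simp add: suff_cause_def)
    then have "?c = asg_of B" using unique c by blast
    then show False by simp
  qed
  have "B' \<subseteq> B" if "min_suff_cause C D B' \<omega>" for B'
  proof
    fix L assume "L \<in> B'"
    from that obtain c where c: "c \<in> asg C" "conj_val c B'" "B' \<in> Pdot C"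
      and "D c \<omega>" by (auto simp: min_suff_cause_def suff_cause_def)
    then have "c = asg_of B" using unique by blast
    then have "lit_val (asg_of B) L" using c(2) \<open>L \<in> B'\<close> by (simp add: conj_val_def)
    moreover have "\<forall>c'\<in>asg C. conj_val c' B \<longrightarrow> c' = asg_of B"
      using conj_val_iff_eq_asg_of[OF assms(1,2)] by blast
    ultimately show "L \<in> B"
      using lit_mem_if_conj_val_unique[OF cB conj_val_asg_of[OF assms(1)]]
        Pdot_lit_var_mem[OF c(3) \<open>L \<in> B'\<close>] by simp
  qed
  moreover have "min_suff_cause C D B \<omega>" using suff no_proper by (simp add: min_suff_cause_def)
  ultimately show ?thesis
    unfolding singular_for_def min_suff_cause_def using no_proper by blast
qed

lemma irreducible_if_unique:
  assumes "B \<in> Pdot C" "\<omega> \<in> \<Omega>" and unique: "\<forall>c\<in>asg C. D c \<omega> \<longleftrightarrow> c = asg_of B"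
  shows "irreducible C \<Omega> D B"
  unfolding irreducible_def
proof (intro allI impI)
  fix R assume R: "suff_rep C \<Omega> D R"
  have cB: "asg_of B \<in> asg C" using asg_of_in_asg[OF assms(1)] .
  then obtain A B' where hit: "(A, B') \<in> set R" "A \<omega>" "conj_val (asg_of B) B'"
    using R assms(2) unique by (fastforce simp: suff_rep_def)
  have "D c \<omega>" if "c \<in> asg C" "conj_val c B'" for c
    using R assms(2) that hit(1,2) unfolding suff_rep_def by blast
  then have "\<forall>c\<in>asg C. conj_val c B' \<longrightarrow> c = asg_of B" using unique by blast
  then have "B \<subseteq> B'"
    using lit_mem_if_conj_val_unique[OF cB hit(3)] Pdot_lit_var_mem[OF assms(1)]
      conj_val_asg_of[OF assms(1)] by (simp add: conj_val_def subset_iff)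
  then show "\<exists>(A, B')\<in>set R. B \<subseteq> B'" using hit(1) by blast
qed

subsection \<open>Monotone descent\<close>

lemma pos_monoD:
  assumes "pos_mono C \<Omega> D L" "\<omega> \<in> \<Omega>" "c \<in> asg C" "c' \<in> asg C"
    and "\<And>v. v \<noteq> lit_var L \<Longrightarrow> c v = c' v" "lit_val c L" "\<not> lit_val c' L" "D c' \<omega>"
  shows "D c \<omega>"
proof -
  from assms(1,2) have "\<forall>c\<in>asg C. \<forall>c'\<in>asg C. (\<forall>v. v \<noteq> lit_var L \<longrightarrow> c v = c' v) \<longrightarrow>
      lit_val c L \<longrightarrow> \<not> lit_val c' L \<longrightarrow> D c' \<omega> \<longrightarrow> D c \<omega>"
    unfolding pos_mono_def by (rule bspec)
  from this[rule_format, OF assms(3-8)] show ?thesis .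
qed

lemma pos_mono_flip:
  assumes "pos_mono C \<Omega> D L" "\<omega> \<in> \<Omega>" "c \<in> asg C" "lit_var L \<in> C"
    and "\<not> lit_val c L" "D c \<omega>"
  shows "D (flip (lit_var L) c) \<omega>"
  using assms(1,2) flip_in_asg[OF assms(3,4)] assms(3)
proof (rule pos_monoD)
  show "flip (lit_var L) c v = c v" if "v \<noteq> lit_var L" for v using that by (simp add: flip_def)
qed (use assms(5,6) in \<open>simp_all add: lit_val_flip\<close>)

text \<open>The induction measure is the number of literals of \<open>B\<close> falsified by \<open>c\<close>; each step
  flips a monotone one, which exists among any two of them.\<close>
lemma exists_neighbour:
  assumes "finite C" "B \<in> Pdot C" "lit_var ` B = C" "\<omega> \<in> \<Omega>"
    and mono: "\<forall>L1\<in>B. \<forall>L2\<in>B. L1 \<noteq> L2 \<longrightarrow> pos_mono C \<Omega> D L1 \<or> pos_mono C \<Omega> D L2"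
  shows "c \<in> asg C \<Longrightarrow> D c \<omega> \<Longrightarrow> c \<noteq> asg_of B \<Longrightarrow> \<exists>L\<in>B. D (flip (lit_var L) (asg_of B)) \<omega>"
proof (induction "card {L\<in>B. \<not> lit_val c L}" arbitrary: c rule: less_induct)
  case less
  define F where "F = {L\<in>B. \<not> lit_val c L}"
  have "finite F" using finite_Pdot[OF assms(1,2)] by (simp add: F_def)
  have "F \<noteq> {}"
    using less.prems conj_val_iff_eq_asg_of[OF assms(2,3)] by (auto simp: F_def conj_val_def)
  then consider L where "F = {L}" | L1 L2 where "L1 \<in> F" "L2 \<in> F" "L1 \<noteq> L2" by blast
  then show ?case
  proof cases
    case (1 L)
    then have "L \<in> B" "conj_val c (B - {L})" by (auto simp: F_def conj_val_def)
    then show ?thesis using conj_val_Diff_iff[OF assms(2,3) less.prems(1)] less.prems by blast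
  next
    case (2 L1 L2)
    then have "pos_mono C \<Omega> D L1 \<or> pos_mono C \<Omega> D L2" using mono by (auto simp: F_def)
    then obtain L L' where L: "L \<in> F" "pos_mono C \<Omega> D L" and "L' \<in> F" "L' \<noteq> L"
      using 2 by blast
    let ?c = "flip (lit_var L) c"
    have vL: "lit_var L \<in> C" using L(1) Pdot_lit_var_mem[OF assms(2)] by (auto simp: F_def)
    have F': "{L\<in>B. \<not> lit_val ?c L} = F - {L}"
      using L(1) inj_on_lit_var_Pdot[OF assms(2)]
      by (auto simp: F_def lit_val_flip inj_on_eq_iff)
    have "L' \<in> {L\<in>B. \<not> lit_val ?c L}" using F' \<open>L' \<in> F\<close> \<open>L' \<noteq> L\<close> by blast
    then have "?c \<noteq> asg_of B" using conj_val_asg_of[OF assms(2)] by (auto simp: conj_val_def)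
    moreover have "D ?c \<omega>"
      using pos_mono_flip[OF L(2) assms(4) less.prems(1) vL] L(1) less.prems(2) by (simp add: F_def)
    moreover have "card {L\<in>B. \<not> lit_val ?c L} < card F"
      unfolding F' using \<open>finite F\<close> L(1) by (rule card_Diff1_less)
    ultimately show ?thesis
      using less.hyps flip_in_asg[OF less.prems(1) vL] unfolding F_def by blast
  qed
qed

subsection \<open>A representation avoiding \<open>B\<close>\<close>

definition canonical_terms ::
  "'v set \<Rightarrow> (('v \<Rightarrow> bool) \<Rightarrow> 'w \<Rightarrow> bool) \<Rightarrow> 'v lit set \<Rightarrow> (('w \<Rightarrow> bool) \<times> 'v lit set) set" where
  "canonical_terms C D B =
     (\<lambda>c. (D c, asg_conj C c)) ` (asg C - {asg_of B}) \<union>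
     (\<lambda>L. (\<lambda>\<omega>. D (asg_of B) \<omega> \<and> D (flip (lit_var L) (asg_of B)) \<omega>, B - {L})) ` B"

lemma finite_canonical_terms: "finite C \<Longrightarrow> B \<in> Pdot C \<Longrightarrow> finite (canonical_terms C D B)"
  by (simp add: canonical_terms_def finite_asg finite_Pdot)

lemma canonical_terms_not_superset:
  assumes "B \<in> Pdot C" "lit_var ` B = C" "(A, B') \<in> canonical_terms C D B"
  shows "\<not> B \<subseteq> B'"
proof
  assume "B \<subseteq> B'"
  with assms(3) obtain c where c: "c \<in> asg C" "c \<noteq> asg_of B" "B \<subseteq> asg_conj C c"
    by (auto simp: canonical_terms_def)
  then have "conj_val c B"
    using conj_val_asg_conj_iff[OF c(1) c(1)] by (auto simp: conj_val_def)
  then show False using c conj_val_iff_eq_asg_of[OF assms(1,2)] by blast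
qed

lemma suff_rep_canonical_terms:
  assumes "B \<in> Pdot C" "lit_var ` B = C" "set R = canonical_terms C D B"
    and neighbour: "\<forall>\<omega>\<in>\<Omega>. D (asg_of B) \<omega> \<longrightarrow> (\<exists>L\<in>B. D (flip (lit_var L) (asg_of B)) \<omega>)"
  shows "suff_rep C \<Omega> D R"
  unfolding suff_rep_def
proof (intro conjI ballI)
  show "case t of (A, B') \<Rightarrow> B' \<in> Pdot C" if "t \<in> set R" for t
    using that assms(3) asg_conj_Pdot Pdot_mono[OF assms(1)]
    by (auto simp: canonical_terms_def)
next
  fix \<omega> c assume \<omega>: "\<omega> \<in> \<Omega>" and c: "c \<in> asg C"
  note Diff_iff = conj_val_Diff_iff[OF assms(1,2) c]
  show "D c \<omega> \<longleftrightarrow> (\<exists>(A, B')\<in>set R. A \<omega> \<and> conj_val c B')"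
  proof
    assume "D c \<omega>"
    show "\<exists>(A, B')\<in>set R. A \<omega> \<and> conj_val c B'"
    proof (cases "c = asg_of B")
      case True
      then obtain L where L: "L \<in> B" "D (flip (lit_var L) (asg_of B)) \<omega>"
        using neighbour \<omega> \<open>D c \<omega>\<close> by blast
      let ?t = "(\<lambda>\<omega>. D (asg_of B) \<omega> \<and> D (flip (lit_var L) (asg_of B)) \<omega>, B - {L})"
      have "?t \<in> set R" using assms(3) L(1) by (auto simp: canonical_terms_def)
      moreover have "conj_val c (B - {L})" using Diff_iff L(1) True by blast
      ultimately show ?thesis using True \<open>D c \<omega>\<close> L(2) by (intro bexI[of _ ?t]) auto
    next
      case False
      then have "(D c, asg_conj C c) \<in> set R" using assms(3) c by (auto simp: canonical_terms_def)
      moreover have "conj_val c (asg_conj C c)" using conj_val_asg_conj_iff[OF c c] by blast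
      ultimately show ?thesis using \<open>D c \<omega>\<close> by (intro bexI[of _ "(D c, asg_conj C c)"]) auto
    qed
  next
    assume "\<exists>(A, B')\<in>set R. A \<omega> \<and> conj_val c B'"
    then obtain A B' where hit: "(A, B') \<in> canonical_terms C D B" "A \<omega>" "conj_val c B'"
      using assms(3) by auto
    then consider c' where "c' \<in> asg C" "A = D c'" "B' = asg_conj C c'"
      | L where "L \<in> B" "A = (\<lambda>\<omega>. D (asg_of B) \<omega> \<and> D (flip (lit_var L) (asg_of B)) \<omega>)"
          "B' = B - {L}"
      by (auto simp: canonical_terms_def)
    then show "D c \<omega>"
    proof cases
      case 1
      then show ?thesis using hit conj_val_asg_conj_iff[OF _ c] by auto
    next
      case 2
      then show ?thesis using hit Diff_iff by auto
    qed
  qed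
qed

lemma irreducible_if_singular:
  assumes "finite C" "B \<in> Pdot C" "lit_var ` B = C" "singular C \<Omega> D B"
  shows "irreducible C \<Omega> D B"
proof -
  obtain \<omega> where \<omega>: "\<omega> \<in> \<Omega>" "singular_for C D B \<omega>" using assms(4) by (auto simp: singular_def)
  have "\<forall>c\<in>asg C. D c \<omega> \<longleftrightarrow> c = asg_of B"
    using singular_for_imp_unique[OF assms(1-3) \<omega>(2)] .
  then show ?thesis by (rule irreducible_if_unique[where D = D, OF assms(2) \<omega>(1)])
qed

lemma singular_if_irreducible:
  assumes "finite C" "B \<in> Pdot C" "lit_var ` B = C"
    and mono: "\<forall>L1\<in>B. \<forall>L2\<in>B. L1 \<noteq> L2 \<longrightarrow> pos_mono C \<Omega> D L1 \<or> pos_mono C \<Omega> D L2"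
    and irreducible: "irreducible C \<Omega> D B"
  shows "singular C \<Omega> D B"
proof (rule ccontr)
  assume not_singular: "\<not> singular C \<Omega> D B"
  have "\<exists>L\<in>B. D (flip (lit_var L) (asg_of B)) \<omega>" if "\<omega> \<in> \<Omega>" "D (asg_of B) \<omega>" for \<omega>
  proof -
    have "\<not> singular_for C D B \<omega>" using not_singular that(1) by (auto simp: singular_def)
    then have "\<not> (\<forall>c\<in>asg C. D c \<omega> \<longleftrightarrow> c = asg_of B)"
      using singular_for_if_unique[where D = D and \<omega> = \<omega>, OF assms(2,3)] by (rule contrapos_nn)
    then obtain c where "c \<in> asg C" "D c \<omega> \<noteq> (c = asg_of B)" by blast
    then show ?thesis using exists_neighbour[OF assms(1-3) that(1) mono] that(2) by auto
  qed
  moreover obtain R where R: "set R = canonical_terms C D B"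
    using finite_list[OF finite_canonical_terms[OF assms(1,2)]] by blast
  ultimately have "suff_rep C \<Omega> D R" using suff_rep_canonical_terms[OF assms(2,3)] by blast
  then obtain A B' where "(A, B') \<in> set R" "B \<subseteq> B'"
    using irreducible unfolding irreducible_def by blast
  then show False using canonical_terms_not_superset[OF assms(2,3)] R by blast
qed

theorem mainTheorem17:
  fixes C :: "'v set" and \<Omega> :: "'w set" and D :: "('v \<Rightarrow> bool) \<Rightarrow> 'w \<Rightarrow> bool"
    and B :: "'v lit set"
  assumes "finite C"
    and "B \<in> Pdot C"
    and "card B = card C"
    and "(\<forall>L\<in>B. pos_mono C \<Omega> D L) \<or> (\<exists>L0\<in>B. \<forall>L\<in>B - {L0}. pos_mono C \<Omega> D L)"
  shows "singular C \<Omega> D B \<longleftrightarrow> irreducible C \<Omega> D B"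
proof
  have cover: "lit_var ` B = C" using lit_var_image_eq[OF assms(1-3)] .
  have mono: "\<forall>L1\<in>B. \<forall>L2\<in>B. L1 \<noteq> L2 \<longrightarrow> pos_mono C \<Omega> D L1 \<or> pos_mono C \<Omega> D L2"
    using assms(4) by blast
  show "singular C \<Omega> D B \<Longrightarrow> irreducible C \<Omega> D B"
    by (rule irreducible_if_singular[OF assms(1,2) cover])
  show "irreducible C \<Omega> D B \<Longrightarrow> singular C \<Omega> D B"
    by (rule singular_if_irreducible[OF assms(1,2) cover mono])
qed

end
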